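(* Let $n\ge 4$, and let $u,v$ be two vertices of the cycle $C_n$ that are not adjacent in $C_n$. Then $\mathscr{Z}^{\rm TAR}(C_n)=\mathscr{Z}^{\rm TAR}(C_n+uv)$; in fact $C_n$ and $C_n+uv$ have exactly the same zero forcing sets.
   Context: $C_n+uv$ is the graph on $V(C_n)$ with edge set $E(C_n)\cup\{uv\}$. Zero forcing: starting with a set $S$ of blue vertices, a blue vertex $v$ may turn blue a white vertex $w$ if $w$ is the only white neighbor of $v$; $S$ is a zero forcing set if repeated application colors all vertices blue. $\mathscr{Z}^{\rm TAR}(G)$ has vertices the zero forcing sets of $G$, two adjacent iff their symmetric difference has size 1. *)

theory Defs
  imports Main
begin

definition cycle_adj :: "nat \<Rightarrow> nat \<Rightarrow> nat \<Rightarrow> bool" where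
  "cycle_adj n i j \<longleftrightarrow> i < n \<and> j < n \<and> i \<noteq> j \<and> (j = Suc i mod n \<or> i = Suc j mod n)"

definition add_edge :: "('a \<Rightarrow> 'a \<Rightarrow> bool) \<Rightarrow> 'a \<Rightarrow> 'a \<Rightarrow> ('a \<Rightarrow> 'a \<Rightarrow> bool)" where
  "add_edge E u v = (\<lambda>x y. E x y \<or> (x = u \<and> y = v) \<or> (x = v \<and> y = u))"

inductive_set zf_closure :: "'a set \<Rightarrow> ('a \<Rightarrow> 'a \<Rightarrow> bool) \<Rightarrow> 'a set \<Rightarrow> 'a set"
  for V E S where
  base: "s \<in> S \<Longrightarrow> s \<in> zf_closure V E S"
| force: "x \<in> zf_closure V E S \<Longrightarrow> w \<in> V \<Longrightarrow> E x w \<Longrightarrow>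
          (\<forall>y\<in>V. E x y \<and> y \<noteq> w \<longrightarrow> y \<in> zf_closure V E S) \<Longrightarrow> w \<in> zf_closure V E S"

definition zero_forcing_set :: "'a set \<Rightarrow> ('a \<Rightarrow> 'a \<Rightarrow> bool) \<Rightarrow> 'a set \<Rightarrow> bool" where
  "zero_forcing_set V E S \<longleftrightarrow> S \<subseteq> V \<and> zf_closure V E S = V"

definition ZF_TAR :: "'a set \<Rightarrow> ('a \<Rightarrow> 'a \<Rightarrow> bool) \<Rightarrow> ('a set set \<times> ('a set \<times> 'a set) set)" where
  "ZF_TAR V E = ({S. zero_forcing_set V E S},
     {(S, T). zero_forcing_set V E S \<and> zero_forcing_set V E T \<and> card ((S - T) \<union> (T - S)) = 1})"

end

theory Submission
  imports Defs
begin

(* For n >= 3 and any extra edge uv, a set S is zero forcing for C_n + uv exactly when it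
   contains two cyclically consecutive vertices. Without such a pair every blue vertex has two
   white cycle neighbours, so nothing is ever forced. With one, a blue arc from a to b keeps
   growing: b forces its outer neighbour unless b is an end of the chord whose other end p is
   still white; but then p lies outside the arc, so a is not on the chord and forces its outer
   neighbour instead. As C_n is itself C_n + uv for an edge uv it already has, C_n and C_n + uv
   have the same zero forcing sets. *)

lemma zf_closure_subset:
  assumes "S \<subseteq> V"
  shows "zf_closure V E S \<subseteq> V"
proof
  fix x assume "x \<in> zf_closure V E S"
  then show "x \<in> V"
    by (induction rule: zf_closure.induct) (use assms in auto)
qed

lemma zf_closure_eq_self_if_no_force:
  assumes two_white: "\<And>x. x \<in> S \<Longrightarrow> \<exists>y\<in>V. \<exists>z\<in>V. y \<noteq> z \<and> E x y \<and> E x z \<and> y \<notin> S \<and> z \<notin> S"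
  shows "zf_closure V E S = S"
proof
  show "zf_closure V E S \<subseteq> S"
  proof
    fix w assume "w \<in> zf_closure V E S"
    then show "w \<in> S"
    proof (induction rule: zf_closure.induct)
      case (force x w)
      obtain y z where "y \<in> V" "z \<in> V" "y \<noteq> z" "E x y" "E x z" "y \<notin> S" "z \<notin> S"
        using two_white[OF \<open>x \<in> S\<close>] by blast
      then show ?case using force.IH(2) by blast
    qed
  qed
qed (auto intro: zf_closure.base)

lemma mod_add_cancel_left:
  fixes a j k n :: nat
  assumes "j < n" "k < n" "(a + j) mod n = (a + k) mod n"
  shows "j = k"
proof -
  have "k \<le> j" if "j < n" "k < n" "(a + j) mod n = (a + k) mod n" for j k
  proof (rule ccontr)
    assume "\<not> k \<le> j"
    then have "n dvd k - j"
      using that(3) mod_eq_dvd_iff_nat[of "a + j" "a + k" n] by simp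
    moreover have "0 < k - j" "k - j < n" using \<open>\<not> k \<le> j\<close> that(2) by auto
    ultimately show False using nat_dvd_not_less by blast
  qed
  from this[of j k] this[of k j] show ?thesis using assms by simp
qed

lemma mod_add_mod_add:
  fixes a j k n :: nat
  shows "((a + j) mod n + k) mod n = (a + (j + k)) mod n"
  by (simp add: mod_add_left_eq add.assoc)

lemma mod_add_pred_succ:
  fixes i n :: nat
  assumes "i < n"
  shows "((i + (n - 1)) mod n + 1) mod n = i"
  unfolding mod_add_mod_add using assms by simp

lemma cycle_adj_iff:
  fixes n i j :: nat
  assumes "3 \<le> n"
  shows "cycle_adj n i j \<longleftrightarrow> i < n \<and> (j = (i + 1) mod n \<or> j = (i + (n - 1)) mod n)"
proof
  assume adj: "cycle_adj n i j"
  then have "i < n" "j < n" by (auto simp: cycle_adj_def)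
  moreover have "j = (i + (n - 1)) mod n" if "i = (j + 1) mod n"
    unfolding that mod_add_mod_add using \<open>j < n\<close> by simp
  ultimately show "i < n \<and> (j = (i + 1) mod n \<or> j = (i + (n - 1)) mod n)"
    using adj by (auto simp: cycle_adj_def)
next
  assume i: "i < n \<and> (j = (i + 1) mod n \<or> j = (i + (n - 1)) mod n)"
  then have "(i + 0) mod n \<noteq> j"
    using assms mod_add_cancel_left[of 0 n 1 i] mod_add_cancel_left[of 0 n "n - 1" i] by auto
  then show "cycle_adj n i j"
    using i mod_add_pred_succ[of i n] by (auto simp: cycle_adj_def)
qed

lemma add_edge_absorb: "E u v \<Longrightarrow> E v u \<Longrightarrow> add_edge E u v = E"
  by (auto simp: add_edge_def fun_eq_iff)

lemma add_edge_cycle_adj_iff: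
  assumes "3 \<le> n"
  shows "add_edge (cycle_adj n) u v x y \<longleftrightarrow>
    x < n \<and> (y = (x + 1) mod n \<or> y = (x + (n - 1)) mod n) \<or> (x = u \<and> y = v) \<or> (x = v \<and> y = u)"
  using assms by (simp add: add_edge_def cycle_adj_iff)

lemma zf_closure_cycle_chord_eq_self:
  assumes n: "3 \<le> n" and S: "S \<subseteq> {..<n}" and no_pair: "\<forall>i\<in>S. (i + 1) mod n \<notin> S"
  shows "zf_closure {..<n} (add_edge (cycle_adj n) u v) S = S"
proof (rule zf_closure_eq_self_if_no_force)
  fix x assume x: "x \<in> S"
  then have "x < n" using S by auto
  let ?y = "(x + 1) mod n" and ?z = "(x + (n - 1)) mod n"
  have "?y \<noteq> ?z"
    using n mod_add_cancel_left[of 1 n "n - 1" x] by auto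
  moreover have "add_edge (cycle_adj n) u v x ?y" "add_edge (cycle_adj n) u v x ?z"
    using \<open>x < n\<close> by (simp_all add: add_edge_cycle_adj_iff[OF n])
  moreover have "?y \<notin> S"
    using no_pair x by blast
  moreover have "?z \<notin> S"
    using no_pair mod_add_pred_succ[OF \<open>x < n\<close>] x by metis
  moreover have "?y < n" "?z < n"
    using n by simp_all
  ultimately show "\<exists>y\<in>{..<n}. \<exists>z\<in>{..<n}. y \<noteq> z \<and> add_edge (cycle_adj n) u v x y
      \<and> add_edge (cycle_adj n) u v x z \<and> y \<notin> S \<and> z \<notin> S"
    by blast
qed

lemma zf_closure_cycle_chord_arc_Suc:
  fixes n u v a K :: nat and S :: "nat set"
  defines "C \<equiv> zf_closure {..<n} (add_edge (cycle_adj n) u v) S"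
  assumes n: "3 \<le> n" and K: "1 \<le> K" "Suc K < n" and a: "a < n"
    and arc: "\<forall>j\<le>K. (a + j) mod n \<in> C"
  shows "\<exists>a'<n. \<forall>j\<le>Suc K. (a' + j) mod n \<in> C"
proof -
  let ?E = "add_edge (cycle_adj n) u v"
  have force: "w \<in> C" if "x \<in> C" "w < n" "?E x w" "\<And>y. y < n \<Longrightarrow> ?E x y \<Longrightarrow> y \<noteq> w \<Longrightarrow> y \<in> C"
    for x w using that zf_closure.force[of x "{..<n}" ?E S w] unfolding C_def by blast
  define b where "b = (a + K) mod n"
  have "b \<in> C" using arc by (simp add: b_def)
  show ?thesis
  proof (cases "\<forall>p<n. (b = u \<and> p = v) \<or> (b = v \<and> p = u) \<longrightarrow> p \<in> C")
    case True
    have "(b + (n - 1)) mod n = (a + (K - 1) + n) mod n"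
      unfolding b_def mod_add_mod_add using K by (simp add: algebra_simps)
    then have pred_b: "(b + (n - 1)) mod n \<in> C"
      using arc by simp
    have "(b + 1) mod n \<in> C"
    proof (rule force[OF \<open>b \<in> C\<close>])
      show "(b + 1) mod n < n" "?E b ((b + 1) mod n)"
        using n by (simp_all add: add_edge_cycle_adj_iff b_def)
      show "y \<in> C" if "y < n" "?E b y" "y \<noteq> (b + 1) mod n" for y
        using that True pred_b by (auto simp: add_edge_cycle_adj_iff[OF n])
    qed
    then have "(a + Suc K) mod n \<in> C"
      by (simp add: b_def mod_Suc_eq)
    then show ?thesis
      using a arc le_Suc_eq by (intro exI[of _ a]) auto
  next
    case False
    then obtain p where p: "(b = u \<and> p = v) \<or> (b = v \<and> p = u)" "p \<notin> C"
      by blast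
    have "a \<noteq> b"
      using mod_add_cancel_left[of 0 n K a] K a by (auto simp: b_def)
    moreover have "a \<noteq> p"
      using arc p(2) a by (metis add_0_right le0 mod_less)
    ultimately have a_off_chord: "a \<noteq> u" "a \<noteq> v"
      using p(1) by auto
    define w where "w = (a + (n - 1)) mod n"
    have "w \<in> C"
    proof (rule force)
      show "a \<in> C" using arc a by (metis add_0_right le0 mod_less)
      have "(a + 1) mod n \<in> C" using arc K by auto
      then show "y \<in> C" if "y < n" "?E a y" "y \<noteq> w" for y
        using that a_off_chord by (auto simp: add_edge_cycle_adj_iff[OF n] w_def)
    qed (use n a in \<open>auto simp: add_edge_cycle_adj_iff w_def\<close>)
    have shift: "(w + Suc j) mod n = (a + j) mod n" for j
      unfolding w_def mod_add_mod_add using n by (simp add: add.left_commute[of a n])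
    show ?thesis
    proof (intro exI[of _ w] conjI allI impI)
      show "w < n" using n by (simp add: w_def)
      fix j assume "j \<le> Suc K"
      then show "(w + j) mod n \<in> C"
        using \<open>w \<in> C\<close> \<open>w < n\<close> arc shift by (cases j) auto
    qed
  qed
qed

lemma zf_closure_cycle_chord_arc:
  fixes n u v i K :: nat and S :: "nat set"
  assumes n: "3 \<le> n" and pair: "i < n" "i \<in> S" "(i + 1) mod n \<in> S"
  shows "1 \<le> K \<Longrightarrow> K < n \<Longrightarrow>
    \<exists>a<n. \<forall>j\<le>K. (a + j) mod n \<in> zf_closure {..<n} (add_edge (cycle_adj n) u v) S"
proof (induction K rule: nat_induct_at_least)
  case base
  have "(i + j) mod n \<in> S" if "j \<le> 1" for j
    using that pair by (cases j) auto
  then show ?case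
    using pair by (auto intro: zf_closure.base)
next
  case (Suc K)
  then obtain a where "a < n" "\<forall>j\<le>K. (a + j) mod n \<in> zf_closure {..<n} (add_edge (cycle_adj n) u v) S"
    by auto
  then show ?case
    using zf_closure_cycle_chord_arc_Suc[OF n Suc.hyps Suc.prems] by blast
qed

lemma zero_forcing_set_cycle_chord_iff:
  fixes n u v :: nat
  assumes n: "3 \<le> n"
  shows "zero_forcing_set {..<n} (add_edge (cycle_adj n) u v) S
    \<longleftrightarrow> S \<subseteq> {..<n} \<and> (\<exists>i\<in>S. (i + 1) mod n \<in> S)"
proof (intro iffI conjI)
  assume zf: "zero_forcing_set {..<n} (add_edge (cycle_adj n) u v) S"
  then show S: "S \<subseteq> {..<n}" by (simp add: zero_forcing_set_def)
  show "\<exists>i\<in>S. (i + 1) mod n \<in> S"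
  proof (rule ccontr)
    assume no_pair: "\<not> ?thesis"
    then have "S = {..<n}"
      using zf zf_closure_cycle_chord_eq_self[OF n S] by (simp add: zero_forcing_set_def)
    then have "0 \<in> S" "(0 + 1) mod n \<in> S"
      using n by auto
    then show False
      using no_pair by blast
  qed
next
  assume "S \<subseteq> {..<n} \<and> (\<exists>i\<in>S. (i + 1) mod n \<in> S)"
  then obtain i where S: "S \<subseteq> {..<n}" and pair: "i < n" "i \<in> S" "(i + 1) mod n \<in> S"
    by blast
  let ?C = "zf_closure {..<n} (add_edge (cycle_adj n) u v) S"
  have "\<exists>a<n. \<forall>j\<le>n - 1. (a + j) mod n \<in> ?C"
    using n by (intro zf_closure_cycle_chord_arc[OF n pair]) auto
  then obtain a where "a < n" and arc: "\<forall>j\<le>n - 1. (a + j) mod n \<in> ?C"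
    by blast
  have "x \<in> ?C" if "x < n" for x
  proof -
    define j where "j = (x + (n - a)) mod n"
    have "j < n"
      using n by (simp add: j_def)
    moreover have "(a + j) mod n = x"
      using \<open>a < n\<close> \<open>x < n\<close> by (simp add: j_def mod_add_right_eq)
    ultimately show ?thesis
      using arc by force
  qed
  then show "zero_forcing_set {..<n} (add_edge (cycle_adj n) u v) S"
    using S zf_closure_subset[OF S] by (auto simp: zero_forcing_set_def)
qed

lemma zero_forcing_set_cycle_iff:
  fixes n :: nat
  assumes n: "3 \<le> n"
  shows "zero_forcing_set {..<n} (cycle_adj n) S \<longleftrightarrow> S \<subseteq> {..<n} \<and> (\<exists>i\<in>S. (i + 1) mod n \<in> S)"
proof -
  have "add_edge (cycle_adj n) 0 1 = cycle_adj n"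
    using n by (intro add_edge_absorb) (auto simp: cycle_adj_def)
  then show ?thesis
    using zero_forcing_set_cycle_chord_iff[OF n, of 0 1 S] by simp
qed

theorem proposition2p30:
  fixes n u v :: nat
  assumes "n \<ge> 4" and "u < n" and "v < n" and "u \<noteq> v" and "\<not> cycle_adj n u v"
  shows "ZF_TAR {..<n} (cycle_adj n) = ZF_TAR {..<n} (add_edge (cycle_adj n) u v)
       \<and> (\<forall>S. zero_forcing_set {..<n} (cycle_adj n) S
              \<longleftrightarrow> zero_forcing_set {..<n} (add_edge (cycle_adj n) u v) S)"
proof -
  have n: "3 \<le> n" using assms(1) by simp
  have "zero_forcing_set {..<n} (cycle_adj n) S
      \<longleftrightarrow> zero_forcing_set {..<n} (add_edge (cycle_adj n) u v) S" for S
    using zero_forcing_set_cycle_iff[OF n] zero_forcing_set_cycle_chord_iff[OF n] by simp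
  then show ?thesis by (simp add: ZF_TAR_def)
qed

end
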